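(* Let $S^0$ be a quasi-ideal adequate transversal of an abundant semigroup $S$. Then there exist a left adequate semigroup $L$ and a right adequate semigroup $R$ (namely the subsemigroups $L=\{x\in S:f_x=f_{\bar x}\}$ and $R=\{x\in S:e_x=e_{\bar x}\}$ of $S$) such that $S\cong T$, where $T=\{(x,a)\in L\times R:\bar x=\bar a\}$ with multiplication $(x,a)(y,b)=(e_xay,\,ayf_b)$ (products in $S$), and such that $T$ contains a quasi-ideal adequate transversal $T^0\cong S^0$.
   Context: For a semigroup $S$, $\mathcal{R}^\ast=\{(a,b): \text{for all } x,y\in S^1,\ xa=ya \iff xb=yb\}$ and $\mathcal{L}^\ast$ dually. $S$ is abundant if every $\mathcal{R}^\ast$-class and $\mathcal{L}^\ast$-class contains an idempotent; adequate if abundant with commuting idempotents; left (resp. right) adequate if abundant and every $\mathcal{R}^\ast$-class (resp. $\mathcal{L}^\ast$-class) contains a unique idempotent. In an adequate semigroup $a^+,a^\ast$ are the unique idempotents $\mathcal{R}^\ast$-, resp. $\mathcal{L}^\ast$-related to $a$. A subsemigroup $U$ of abundant $S$ is a $\ast$-subsemigroup if $U$ is abundant and $\mathcal{L}^\ast_U=\mathcal{L}^\ast_S\cap(U\times U)$, $\mathcal{R}^\ast_U=\mathcal{R}^\ast_S\cap(U\times U)$. An adequate $\ast$-subsemigroup $S^0$ of abundant $S$ is an adequate transversal if for each $x\in S$ there is a unique $\bar x\in S^0$ and idempotents $e,f$ of $S$ with $x=e\bar xf$, $e\,\mathcal{L}\,\bar x^+$, $f\,\mathcal{R}\,\bar x^\ast$;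 these $e,f$ are unique and denoted $e_x,f_x$. It is a quasi-ideal adequate transversal if moreover $S^0SS^0\subseteq S^0$. *)

theory Defs
  imports Main
begin

definition sgrp :: "'a set \<Rightarrow> ('a \<Rightarrow> 'a \<Rightarrow> 'a) \<Rightarrow> bool" where
  "sgrp S m \<longleftrightarrow> (\<forall>x\<in>S. \<forall>y\<in>S. m x y \<in> S) \<and>
     (\<forall>x\<in>S. \<forall>y\<in>S. \<forall>z\<in>S. m (m x y) z = m x (m y z))"

text \<open>Elements of S^1: None is the adjoined identity.\<close>
definition one_adj :: "'a set \<Rightarrow> 'a option set" where
  "one_adj S = insert None (Some ` S)"

fun lmul :: "('a \<Rightarrow> 'a \<Rightarrow> 'a) \<Rightarrow> 'a option \<Rightarrow> 'a \<Rightarrow> 'a" where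
  "lmul m None a = a"
| "lmul m (Some x) a = m x a"

fun rmul :: "('a \<Rightarrow> 'a \<Rightarrow> 'a) \<Rightarrow> 'a \<Rightarrow> 'a option \<Rightarrow> 'a" where
  "rmul m a None = a"
| "rmul m a (Some x) = m a x"

definition Rstar :: "'a set \<Rightarrow> ('a \<Rightarrow> 'a \<Rightarrow> 'a) \<Rightarrow> 'a \<Rightarrow> 'a \<Rightarrow> bool" where
  "Rstar S m a b \<longleftrightarrow> a \<in> S \<and> b \<in> S \<and>
     (\<forall>x\<in>one_adj S. \<forall>y\<in>one_adj S. lmul m x a = lmul m y a \<longleftrightarrow> lmul m x b = lmul m y b)"

definition Lstar :: "'a set \<Rightarrow> ('a \<Rightarrow> 'a \<Rightarrow> 'a) \<Rightarrow> 'a \<Rightarrow> 'a \<Rightarrow> bool" where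
  "Lstar S m a b \<longleftrightarrow> a \<in> S \<and> b \<in> S \<and>
     (\<forall>x\<in>one_adj S. \<forall>y\<in>one_adj S. rmul m a x = rmul m a y \<longleftrightarrow> rmul m b x = rmul m b y)"

definition GreenL :: "'a set \<Rightarrow> ('a \<Rightarrow> 'a \<Rightarrow> 'a) \<Rightarrow> 'a \<Rightarrow> 'a \<Rightarrow> bool" where
  "GreenL S m a b \<longleftrightarrow> a \<in> S \<and> b \<in> S \<and>
     (\<lambda>x. lmul m x a) ` one_adj S = (\<lambda>x. lmul m x b) ` one_adj S"

definition GreenR :: "'a set \<Rightarrow> ('a \<Rightarrow> 'a \<Rightarrow> 'a) \<Rightarrow> 'a \<Rightarrow> 'a \<Rightarrow> bool" where
  "GreenR S m a b \<longleftrightarrow> a \<in> S \<and> b \<in> S \<and>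
     (\<lambda>x. rmul m a x) ` one_adj S = (\<lambda>x. rmul m b x) ` one_adj S"

definition idems :: "'a set \<Rightarrow> ('a \<Rightarrow> 'a \<Rightarrow> 'a) \<Rightarrow> 'a set" where
  "idems S m = {e \<in> S. m e e = e}"

definition abundant :: "'a set \<Rightarrow> ('a \<Rightarrow> 'a \<Rightarrow> 'a) \<Rightarrow> bool" where
  "abundant S m \<longleftrightarrow> sgrp S m \<and>
     (\<forall>a\<in>S. (\<exists>e\<in>idems S m. Rstar S m a e) \<and> (\<exists>f\<in>idems S m. Lstar S m a f))"

definition adequate :: "'a set \<Rightarrow> ('a \<Rightarrow> 'a \<Rightarrow> 'a) \<Rightarrow> bool" where
  "adequate S m \<longleftrightarrow> abundant S m \<and>
     (\<forall>e\<in>idems S m. \<forall>f\<in>idems S m. m e f = m f e)"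

definition left_adequate :: "'a set \<Rightarrow> ('a \<Rightarrow> 'a \<Rightarrow> 'a) \<Rightarrow> bool" where
  "left_adequate S m \<longleftrightarrow> abundant S m \<and>
     (\<forall>a\<in>S. \<exists>!e. e \<in> idems S m \<and> Rstar S m a e)"

definition right_adequate :: "'a set \<Rightarrow> ('a \<Rightarrow> 'a \<Rightarrow> 'a) \<Rightarrow> bool" where
  "right_adequate S m \<longleftrightarrow> abundant S m \<and>
     (\<forall>a\<in>S. \<exists>!e. e \<in> idems S m \<and> Lstar S m a e)"

definition plus :: "'a set \<Rightarrow> ('a \<Rightarrow> 'a \<Rightarrow> 'a) \<Rightarrow> 'a \<Rightarrow> 'a" where
  "plus U m a = (THE e. e \<in> idems U m \<and> Rstar U m a e)"

definition astar :: "'a set \<Rightarrow> ('a \<Rightarrow> 'a \<Rightarrow> 'a) \<Rightarrow> 'a \<Rightarrow> 'a" where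
  "astar U m a = (THE e. e \<in> idems U m \<and> Lstar U m a e)"

definition star_subsemigroup :: "'a set \<Rightarrow> 'a set \<Rightarrow> ('a \<Rightarrow> 'a \<Rightarrow> 'a) \<Rightarrow> bool" where
  "star_subsemigroup U S m \<longleftrightarrow> U \<subseteq> S \<and> abundant U m \<and>
     (\<forall>a\<in>U. \<forall>b\<in>U. Lstar U m a b \<longleftrightarrow> Lstar S m a b) \<and>
     (\<forall>a\<in>U. \<forall>b\<in>U. Rstar U m a b \<longleftrightarrow> Rstar S m a b)"

definition decomp :: "'a set \<Rightarrow> 'a set \<Rightarrow> ('a \<Rightarrow> 'a \<Rightarrow> 'a) \<Rightarrow> 'a \<Rightarrow> 'a \<Rightarrow> 'a \<Rightarrow> 'a \<Rightarrow> bool" where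
  "decomp S0 S m x xb e f \<longleftrightarrow> xb \<in> S0 \<and> e \<in> idems S m \<and> f \<in> idems S m \<and>
     x = m (m e xb) f \<and> GreenL S m e (plus S0 m xb) \<and> GreenR S m f (astar S0 m xb)"

definition adequate_transversal :: "'a set \<Rightarrow> 'a set \<Rightarrow> ('a \<Rightarrow> 'a \<Rightarrow> 'a) \<Rightarrow> bool" where
  "adequate_transversal S0 S m \<longleftrightarrow> abundant S m \<and> adequate S0 m \<and> star_subsemigroup S0 S m \<and>
     (\<forall>x\<in>S. \<exists>!xb. \<exists>e f. decomp S0 S m x xb e f)"

definition qi_adequate_transversal :: "'a set \<Rightarrow> 'a set \<Rightarrow> ('a \<Rightarrow> 'a \<Rightarrow> 'a) \<Rightarrow> bool" where
  "qi_adequate_transversal S0 S m \<longleftrightarrow> adequate_transversal S0 S m \<and>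
     (\<forall>a\<in>S0. \<forall>s\<in>S. \<forall>b\<in>S0. m (m a s) b \<in> S0)"

definition tbar :: "'a set \<Rightarrow> 'a set \<Rightarrow> ('a \<Rightarrow> 'a \<Rightarrow> 'a) \<Rightarrow> 'a \<Rightarrow> 'a" where
  "tbar S0 S m x = (THE xb. \<exists>e f. decomp S0 S m x xb e f)"

definition te :: "'a set \<Rightarrow> 'a set \<Rightarrow> ('a \<Rightarrow> 'a \<Rightarrow> 'a) \<Rightarrow> 'a \<Rightarrow> 'a" where
  "te S0 S m x = (THE e. \<exists>f. decomp S0 S m x (tbar S0 S m x) e f)"

definition tf :: "'a set \<Rightarrow> 'a set \<Rightarrow> ('a \<Rightarrow> 'a \<Rightarrow> 'a) \<Rightarrow> 'a \<Rightarrow> 'a" where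
  "tf S0 S m x = (THE f. \<exists>e. decomp S0 S m x (tbar S0 S m x) e f)"

definition sgrp_iso :: "('a \<Rightarrow> 'b) \<Rightarrow> 'a set \<Rightarrow> ('a \<Rightarrow> 'a \<Rightarrow> 'a) \<Rightarrow> 'b set \<Rightarrow> ('b \<Rightarrow> 'b \<Rightarrow> 'b) \<Rightarrow> bool" where
  "sgrp_iso \<phi> S m T n \<longleftrightarrow> bij_betw \<phi> S T \<and> (\<forall>x\<in>S. \<forall>y\<in>S. \<phi> (m x y) = n (\<phi> x) (\<phi> y))"

end

theory Submission
  imports Defs
begin

text \<open>
  Every \<open>x \<in> S\<close> factors uniquely as \<open>x = e\<^sub>x x\<^sup>- f\<^sub>x\<close> with \<open>x\<^sup>- \<in> S\<^sup>0\<close>. Since \<open>S\<^sup>0\<close> is a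
  quasi-ideal, \<open>d = x\<^sup>- f\<^sub>x e\<^sub>z z\<^sup>-\<close> lies in \<open>S\<^sup>0\<close>, and \<open>x z = (e\<^sub>x d\<^sup>+) d (d\<^sup>* f\<^sub>z)\<close> is the
  factorization of \<open>x z\<close>. Hence \<open>x \<mapsto> (e\<^sub>x x\<^sup>-, x\<^sup>- f\<^sub>x)\<close> is an isomorphism of \<open>S\<close> onto \<open>T\<close>:
  the components lie in \<open>L\<close> and \<open>R\<close> over the same element of \<open>S\<^sup>0\<close>, and \<open>x\<close> is recovered as
  their product over it. All notions involved are invariant under isomorphism, so the image of
  \<open>S\<^sup>0\<close> is a quasi-ideal adequate transversal of \<open>T\<close>. \<open>L\<close> is left adequate because two
  \<open>\<R>\<close>-related idempotents of \<open>L\<close> are \<open>\<L>\<close>-related to idempotents \<open>\<alpha>, \<alpha>'\<close> of \<open>S\<^sup>0\<close>, uniqueness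
  of the factorization forces \<open>\<alpha> = \<alpha>'\<close>, and then the two idempotents coincide; \<open>R\<close> is right
  adequate by left-right duality.
\<close>

lemma one_adj_None [simp]: "None \<in> one_adj S"
  by (simp add: one_adj_def)

lemma one_adj_Some_iff [simp]: "Some x \<in> one_adj S \<longleftrightarrow> x \<in> S"
  by (auto simp: one_adj_def)

lemma one_adj_mono: "U \<subseteq> S \<Longrightarrow> s \<in> one_adj U \<Longrightarrow> s \<in> one_adj S"
  by (auto simp: one_adj_def)

lemma sgrp_closed: "sgrp S m \<Longrightarrow> x \<in> S \<Longrightarrow> y \<in> S \<Longrightarrow> m x y \<in> S"
  by (simp add: sgrp_def)

lemma sgrp_assoc: "sgrp S m \<Longrightarrow> x \<in> S \<Longrightarrow> y \<in> S \<Longrightarrow> z \<in> S \<Longrightarrow> m (m x y) z = m x (m y z)"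
  by (simp add: sgrp_def)

lemma lmul_closed: "sgrp S m \<Longrightarrow> s \<in> one_adj S \<Longrightarrow> a \<in> S \<Longrightarrow> lmul m s a \<in> S"
  by (cases s) (auto simp: sgrp_def)

lemma lmul_assoc:
  "sgrp S m \<Longrightarrow> s \<in> one_adj S \<Longrightarrow> a \<in> S \<Longrightarrow> b \<in> S \<Longrightarrow> lmul m s (m a b) = m (lmul m s a) b"
  by (cases s) (auto simp: sgrp_def)

lemma idemsI: "x \<in> U \<Longrightarrow> m x x = x \<Longrightarrow> x \<in> idems U m"
  by (simp add: idems_def)

lemma Rstar_cancel:
  "Rstar U m a b \<Longrightarrow> s \<in> one_adj U \<Longrightarrow> t \<in> one_adj U \<Longrightarrow>
   lmul m s a = lmul m t a \<Longrightarrow> lmul m s b = lmul m t b"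
  by (simp add: Rstar_def)

lemma Lstar_cancel:
  "Lstar U m a b \<Longrightarrow> s \<in> one_adj U \<Longrightarrow> t \<in> one_adj U \<Longrightarrow>
   rmul m a s = rmul m a t \<Longrightarrow> rmul m b s = rmul m b t"
  by (simp add: Lstar_def)

lemma Rstar_refl: "a \<in> U \<Longrightarrow> Rstar U m a a" by (simp add: Rstar_def)
lemma Rstar_sym: "Rstar U m a b \<Longrightarrow> Rstar U m b a" by (simp add: Rstar_def)
lemma Rstar_trans: "Rstar U m a b \<Longrightarrow> Rstar U m b c \<Longrightarrow> Rstar U m a c" by (simp add: Rstar_def)
lemma Lstar_sym: "Lstar U m a b \<Longrightarrow> Lstar U m b a" by (simp add: Lstar_def)

lemma Rstar_restrict: "Rstar S m a b \<Longrightarrow> U \<subseteq> S \<Longrightarrow> a \<in> U \<Longrightarrow> b \<in> U \<Longrightarrow> Rstar U m a b"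
  unfolding Rstar_def using one_adj_mono by blast

lemma Lstar_restrict: "Lstar S m a b \<Longrightarrow> U \<subseteq> S \<Longrightarrow> a \<in> U \<Longrightarrow> b \<in> U \<Longrightarrow> Lstar U m a b"
  unfolding Lstar_def using one_adj_mono by blast

lemma Rstar_idem_absorb:
  assumes "Rstar U m a e" and "e \<in> idems U m"
  shows "m e a = a"
  using Rstar_cancel[OF Rstar_sym[OF assms(1)], of "Some e" None] assms(2) by (simp add: idems_def)

lemma Rstar_by_factors:
  assumes "sgrp U m" and "p \<in> U" "a \<in> U" "q \<in> U" and "m a p = p" "m p q = a"
  shows "Rstar U m p a"
proof -
  have a_from_p: "lmul m s a = m (lmul m s p) q" if "s \<in> one_adj U" for s
    using lmul_assoc[OF assms(1) that assms(2,4)] assms(6) by simp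
  have p_from_a: "lmul m s p = m (lmul m s a) p" if "s \<in> one_adj U" for s
    using lmul_assoc[OF assms(1) that assms(3,2)] assms(5) by simp
  show ?thesis
    unfolding Rstar_def using assms(2,3) a_from_p p_from_a by metis
qed

lemma GreenL_idems_iff:
  assumes S: "sgrp S m" and e: "e \<in> idems S m" and g: "g \<in> idems S m"
  shows "GreenL S m e g \<longleftrightarrow> m e g = e \<and> m g e = g"
proof
  have absorb: "m u v = u" if "v \<in> idems S m" "u \<in> (\<lambda>x. lmul m x v) ` one_adj S" for u v
  proof -
    from that(2) obtain x where x: "x \<in> one_adj S" "u = lmul m x v" by auto
    have v: "v \<in> S" "m v v = v" using that(1) by (simp_all add: idems_def)
    have "m u v = lmul m x (m v v)" using lmul_assoc[OF S x(1) v(1) v(1)] x(2) by simp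
    thus ?thesis using v(2) x(2) by simp
  qed
  have self: "u \<in> (\<lambda>x. lmul m x u) ` one_adj S" for u
    by (rule image_eqI[of _ _ None]) auto
  assume "GreenL S m e g"
  hence "(\<lambda>x. lmul m x e) ` one_adj S = (\<lambda>x. lmul m x g) ` one_adj S"
    by (simp add: GreenL_def)
  thus "m e g = e \<and> m g e = g"
    using absorb[OF g, of e] absorb[OF e, of g] self[of e] self[of g] by simp
next
  have sub: "(\<lambda>x. lmul m x u) ` one_adj S \<subseteq> (\<lambda>x. lmul m x v) ` one_adj S"
    if "u \<in> S" "v \<in> S" "m u v = u" for u v
  proof
    fix y assume "y \<in> (\<lambda>x. lmul m x u) ` one_adj S"
    then obtain x where x: "x \<in> one_adj S" "y = lmul m x u" by auto
    have "y = lmul m x (m u v)" using x(2) that(3) by simp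
    also have "\<dots> = lmul m (Some (lmul m x u)) v" using lmul_assoc[OF S x(1) that(1,2)] by simp
    finally show "y \<in> (\<lambda>x. lmul m x v) ` one_adj S" using x that lmul_closed[OF S] by fastforce
  qed
  assume "m e g = e \<and> m g e = g"
  thus "GreenL S m e g" unfolding GreenL_def using sub[of e g] sub[of g e] e g
    by (auto simp: idems_def)
qed

section \<open>Left-right duality\<close>

definition op_mult :: "('a \<Rightarrow> 'a \<Rightarrow> 'a) \<Rightarrow> 'a \<Rightarrow> 'a \<Rightarrow> 'a" where
  "op_mult m x y = m y x"

lemma lmul_op_mult: "lmul (op_mult m) s a = rmul m a s"
  by (cases s) (simp_all add: op_mult_def)

lemma rmul_op_mult: "rmul (op_mult m) a s = lmul m s a"
  by (cases s) (simp_all add: op_mult_def)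

lemma Rstar_op_mult: "Rstar U (op_mult m) = Lstar U m"
  by (intro ext) (simp add: Rstar_def Lstar_def lmul_op_mult)

lemma Lstar_op_mult: "Lstar U (op_mult m) = Rstar U m"
  by (intro ext) (simp add: Rstar_def Lstar_def rmul_op_mult)

lemma GreenL_op_mult: "GreenL U (op_mult m) = GreenR U m"
  by (intro ext) (simp add: GreenL_def GreenR_def lmul_op_mult)

lemma GreenR_op_mult: "GreenR U (op_mult m) = GreenL U m"
  by (intro ext) (simp add: GreenL_def GreenR_def rmul_op_mult)

lemma idems_op_mult: "idems U (op_mult m) = idems U m"
  by (simp add: idems_def op_mult_def)

lemma sgrp_op_mult: "sgrp U (op_mult m) = sgrp U m"
  unfolding sgrp_def op_mult_def by (intro iffI conjI; (elim conjE)?; metis)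

lemma abundant_op_mult: "abundant U (op_mult m) = abundant U m"
  unfolding abundant_def by (auto simp: sgrp_op_mult idems_op_mult Rstar_op_mult Lstar_op_mult)

lemma adequate_op_mult: "adequate U (op_mult m) = adequate U m"
  unfolding adequate_def by (auto simp: abundant_op_mult idems_op_mult op_mult_def)

lemma plus_op_mult: "plus U (op_mult m) = astar U m"
  by (intro ext) (simp add: plus_def astar_def idems_op_mult Rstar_op_mult)

lemma astar_op_mult: "astar U (op_mult m) = plus U m"
  by (intro ext) (simp add: plus_def astar_def idems_op_mult Lstar_op_mult)

lemma left_adequate_op_mult: "left_adequate U (op_mult m) = right_adequate U m"
  unfolding left_adequate_def right_adequate_def
  by (simp add: abundant_op_mult idems_op_mult Rstar_op_mult)

lemma star_subsemigroup_op_mult: "star_subsemigroup U S (op_mult m) = star_subsemigroup U S m"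
  unfolding star_subsemigroup_def by (auto simp: abundant_op_mult Rstar_op_mult Lstar_op_mult)

lemma Lstar_idem_absorb: "Lstar U m a e \<Longrightarrow> e \<in> idems U m \<Longrightarrow> m a e = a"
  using Rstar_idem_absorb[of U "op_mult m" a e]
  by (simp add: Rstar_op_mult idems_op_mult op_mult_def)

lemma Lstar_by_factors:
  assumes "sgrp U m" and "p \<in> U" "a \<in> U" "q \<in> U" and "m p a = p" "m q p = a"
  shows "Lstar U m p a"
  using Rstar_by_factors[of U "op_mult m" p a q] assms
  by (simp add: sgrp_op_mult Rstar_op_mult op_mult_def)

lemma GreenR_idems_iff:
  "sgrp S m \<Longrightarrow> e \<in> idems S m \<Longrightarrow> g \<in> idems S m \<Longrightarrow> GreenR S m e g \<longleftrightarrow> m e g = g \<and> m g e = e"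
  using GreenL_idems_iff[of S "op_mult m" e g]
  by (auto simp: sgrp_op_mult idems_op_mult GreenL_op_mult op_mult_def)

lemma adequate_ex1_Rstar_idem:
  assumes ad: "adequate U m" and a: "a \<in> U"
  shows "\<exists>!e. e \<in> idems U m \<and> Rstar U m a e"
proof -
  from ad a obtain e where e: "e \<in> idems U m" "Rstar U m a e"
    by (auto simp: adequate_def abundant_def)
  moreover have "e' = e" if "e' \<in> idems U m" "Rstar U m a e'" for e'
  proof -
    have r: "Rstar U m e e'" using e that Rstar_sym Rstar_trans by metis
    have "m e' e = e" using Rstar_idem_absorb[OF r that(1)] .
    moreover have "m e e' = e'" using Rstar_idem_absorb[OF Rstar_sym[OF r] e(1)] .
    moreover have "m e e' = m e' e" using ad e(1) that(1) by (simp add: adequate_def)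
    ultimately show ?thesis by simp
  qed
  ultimately show ?thesis by blast
qed

lemma plus_idem_Rstar: "adequate U m \<Longrightarrow> a \<in> U \<Longrightarrow> plus U m a \<in> idems U m \<and> Rstar U m a (plus U m a)"
  unfolding plus_def by (rule theI') (rule adequate_ex1_Rstar_idem)

lemma plus_eqI:
  assumes "adequate U m" and "e \<in> idems U m" and "Rstar U m a e"
  shows "plus U m a = e"
proof -
  have "a \<in> U" using assms(3) by (simp add: Rstar_def)
  then show ?thesis
    unfolding plus_def using the1_equality[OF adequate_ex1_Rstar_idem[OF assms(1)]] assms(2,3) by blast
qed

lemma plus_of_idem: "adequate U m \<Longrightarrow> e \<in> idems U m \<Longrightarrow> plus U m e = e"
  by (rule plus_eqI) (auto intro: Rstar_refl simp: idems_def)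

lemma astar_idem_Lstar:
  "adequate U m \<Longrightarrow> a \<in> U \<Longrightarrow> astar U m a \<in> idems U m \<and> Lstar U m a (astar U m a)"
  using plus_idem_Rstar[of U "op_mult m" a]
  by (simp add: adequate_op_mult plus_op_mult idems_op_mult Rstar_op_mult)

lemma astar_eqI: "adequate U m \<Longrightarrow> e \<in> idems U m \<Longrightarrow> Lstar U m a e \<Longrightarrow> astar U m a = e"
  using plus_eqI[of U "op_mult m" e a]
  by (simp add: adequate_op_mult plus_op_mult idems_op_mult Rstar_op_mult)

lemma astar_of_idem: "adequate U m \<Longrightarrow> e \<in> idems U m \<Longrightarrow> astar U m e = e"
  using plus_of_idem[of U "op_mult m" e]
  by (simp add: adequate_op_mult plus_op_mult idems_op_mult)

section \<open>Invariance under isomorphism\<close>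

locale sgrp_embedding =
  fixes \<phi> :: "'a \<Rightarrow> 'b" and S :: "'a set" and m :: "'a \<Rightarrow> 'a \<Rightarrow> 'a" and n :: "'b \<Rightarrow> 'b \<Rightarrow> 'b"
  assumes sgrp_carrier: "sgrp S m" and inj: "inj_on \<phi> S"
    and hom: "\<And>x y. x \<in> S \<Longrightarrow> y \<in> S \<Longrightarrow> \<phi> (m x y) = n (\<phi> x) (\<phi> y)"
begin

lemma hom_rev: "x \<in> S \<Longrightarrow> y \<in> S \<Longrightarrow> n (\<phi> x) (\<phi> y) = \<phi> (m x y)"
  using hom by simp

lemma closed: "x \<in> S \<Longrightarrow> y \<in> S \<Longrightarrow> m x y \<in> S"
  using sgrp_carrier by (simp add: sgrp_def)

lemma eq_iff: "x \<in> S \<Longrightarrow> y \<in> S \<Longrightarrow> \<phi> x = \<phi> y \<longleftrightarrow> x = y"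
  using inj by (meson inj_on_eq_iff)

lemma image_mem_iff: "U \<subseteq> S \<Longrightarrow> x \<in> S \<Longrightarrow> \<phi> x \<in> \<phi> ` U \<longleftrightarrow> x \<in> U"
  using inj by (auto dest: inj_onD)

lemma op_mult_embedding: "sgrp_embedding \<phi> S (op_mult m) (op_mult n)"
  using sgrp_carrier inj hom by unfold_locales (simp_all add: sgrp_op_mult op_mult_def)

lemma one_adj_image: "one_adj (\<phi> ` U) = map_option \<phi> ` one_adj U"
  by (simp add: one_adj_def image_image)

lemma lmul_image:
  "U \<subseteq> S \<Longrightarrow> s \<in> one_adj U \<Longrightarrow> a \<in> S \<Longrightarrow> lmul n (map_option \<phi> s) (\<phi> a) = \<phi> (lmul m s a)"
  by (cases s) (auto simp: hom_rev one_adj_def)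

lemma lmul_image_eq_iff:
  "U \<subseteq> S \<Longrightarrow> s \<in> one_adj U \<Longrightarrow> t \<in> one_adj U \<Longrightarrow> a \<in> S \<Longrightarrow>
   \<phi> (lmul m s a) = \<phi> (lmul m t a) \<longleftrightarrow> lmul m s a = lmul m t a"
  by (rule eq_iff) (auto intro: lmul_closed[OF sgrp_carrier] one_adj_mono)

lemma Rstar_image:
  "U \<subseteq> S \<Longrightarrow> a \<in> S \<Longrightarrow> b \<in> S \<Longrightarrow> Rstar (\<phi> ` U) n (\<phi> a) (\<phi> b) \<longleftrightarrow> Rstar U m a b"
  unfolding Rstar_def
  by (simp add: image_mem_iff one_adj_image lmul_image lmul_image_eq_iff cong: conj_cong)

lemma Lstar_image:
  "U \<subseteq> S \<Longrightarrow> a \<in> S \<Longrightarrow> b \<in> S \<Longrightarrow> Lstar (\<phi> ` U) n (\<phi> a) (\<phi> b) \<longleftrightarrow> Lstar U m a b"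
  using sgrp_embedding.Rstar_image[OF op_mult_embedding] by (simp add: Rstar_op_mult)

lemma GreenL_image: "a \<in> S \<Longrightarrow> b \<in> S \<Longrightarrow> GreenL (\<phi> ` S) n (\<phi> a) (\<phi> b) \<longleftrightarrow> GreenL S m a b"
proof -
  assume a: "a \<in> S" and b: "b \<in> S"
  have orbit: "(\<lambda>s. lmul n s (\<phi> c)) ` one_adj (\<phi> ` S) = \<phi> ` ((\<lambda>s. lmul m s c) ` one_adj S)"
    if "c \<in> S" for c
    unfolding one_adj_image image_image using lmul_image[OF subset_refl _ that]
    by (auto intro!: image_cong)
  have sub: "(\<lambda>s. lmul m s c) ` one_adj S \<subseteq> S" if "c \<in> S" for c
    using lmul_closed[OF sgrp_carrier _ that] by auto
  show ?thesis unfolding GreenL_def using orbit[OF a] orbit[OF b] sub[OF a] sub[OF b] a b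
    inj_on_image_eq_iff[OF inj] by simp
qed

lemma GreenR_image: "a \<in> S \<Longrightarrow> b \<in> S \<Longrightarrow> GreenR (\<phi> ` S) n (\<phi> a) (\<phi> b) \<longleftrightarrow> GreenR S m a b"
  using sgrp_embedding.GreenL_image[OF op_mult_embedding] by (simp add: GreenL_op_mult)

lemma idems_image: "U \<subseteq> S \<Longrightarrow> x \<in> S \<Longrightarrow> \<phi> x \<in> idems (\<phi> ` U) n \<longleftrightarrow> x \<in> idems U m"
  unfolding idems_def by (simp add: image_mem_iff hom_rev eq_iff closed)

lemma sgrp_image: "U \<subseteq> S \<Longrightarrow> sgrp U m \<Longrightarrow> sgrp (\<phi> ` U) n"
  unfolding sgrp_def by (auto simp: hom_rev subset_iff)

lemma abundant_image: "U \<subseteq> S \<Longrightarrow> abundant U m \<Longrightarrow> abundant (\<phi> ` U) n"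
proof -
  assume U: "U \<subseteq> S" and ab: "abundant U m"
  show ?thesis unfolding abundant_def
  proof (intro conjI ballI)
    show "sgrp (\<phi> ` U) n" using sgrp_image[OF U] ab by (simp add: abundant_def)
    fix a' assume "a' \<in> \<phi> ` U"
    then obtain a where a: "a \<in> U" "a' = \<phi> a" by blast
    from ab a obtain e f where ef: "e \<in> idems U m" "Rstar U m a e" "f \<in> idems U m" "Lstar U m a f"
      by (auto simp: abundant_def)
    have S: "a \<in> S" "e \<in> S" "f \<in> S" using U a ef by (auto simp: idems_def)
    show "\<exists>e\<in>idems (\<phi> ` U) n. Rstar (\<phi> ` U) n a' e"
      using ef S a U by (intro bexI[of _ "\<phi> e"]) (simp_all add: Rstar_image idems_image)
    show "\<exists>f\<in>idems (\<phi> ` U) n. Lstar (\<phi> ` U) n a' f"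
      using ef S a U by (intro bexI[of _ "\<phi> f"]) (simp_all add: Lstar_image idems_image)
  qed
qed

lemma adequate_image: "U \<subseteq> S \<Longrightarrow> adequate U m \<Longrightarrow> adequate (\<phi> ` U) n"
proof -
  assume U: "U \<subseteq> S" and ad: "adequate U m"
  have "n e' f' = n f' e'" if ef: "e' \<in> idems (\<phi> ` U) n" "f' \<in> idems (\<phi> ` U) n" for e' f'
  proof -
    obtain e f where "e \<in> U" "f \<in> U" "e' = \<phi> e" "f' = \<phi> f"
      using ef unfolding idems_def by blast
    moreover hence "e \<in> idems U m" "f \<in> idems U m" using ef U idems_image by auto
    moreover have "e \<in> S" "f \<in> S" using U calculation by auto
    ultimately show ?thesis using ad by (simp add: adequate_def hom_rev)
  qed
  thus ?thesis using ad abundant_image[OF U] by (simp add: adequate_def)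
qed

lemma plus_image:
  assumes U: "U \<subseteq> S" and ad: "adequate U m" and a: "a \<in> U"
  shows "plus (\<phi> ` U) n (\<phi> a) = \<phi> (plus U m a)"
proof -
  note P = plus_idem_Rstar[OF ad a]
  have "a \<in> S" "plus U m a \<in> S" using P U a by (auto simp: idems_def)
  thus ?thesis
    by (intro plus_eqI[OF adequate_image[OF U ad]]) (use P U in \<open>simp_all add: idems_image Rstar_image\<close>)
qed

lemma astar_image:
  "U \<subseteq> S \<Longrightarrow> adequate U m \<Longrightarrow> a \<in> U \<Longrightarrow> astar (\<phi> ` U) n (\<phi> a) = \<phi> (astar U m a)"
  using sgrp_embedding.plus_image[OF op_mult_embedding] by (simp add: adequate_op_mult plus_op_mult)

lemma star_subsemigroup_image:
  assumes st: "star_subsemigroup U S m"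
  shows "star_subsemigroup (\<phi> ` U) (\<phi> ` S) n"
  unfolding star_subsemigroup_def
proof (intro conjI ballI)
  have U: "U \<subseteq> S" using st by (simp add: star_subsemigroup_def)
  then show "\<phi> ` U \<subseteq> \<phi> ` S" by blast
  show "abundant (\<phi> ` U) n" using abundant_image[OF U] st by (simp add: star_subsemigroup_def)
  fix a' b' assume "a' \<in> \<phi> ` U" "b' \<in> \<phi> ` U"
  then obtain a b where ab: "a \<in> U" "b \<in> U" "a' = \<phi> a" "b' = \<phi> b" by blast
  hence "a \<in> S" "b \<in> S" using U by auto
  thus "Lstar (\<phi> ` U) n a' b' = Lstar (\<phi> ` S) n a' b'"
    and "Rstar (\<phi> ` U) n a' b' = Rstar (\<phi> ` S) n a' b'"
    using st ab U by (simp_all add: Lstar_image Rstar_image star_subsemigroup_def)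
qed

lemma decomp_image:
  assumes ad: "adequate S0 m" and U: "S0 \<subseteq> S" and S: "x \<in> S" "b \<in> S" "e \<in> S" "f \<in> S"
  shows "decomp (\<phi> ` S0) (\<phi> ` S) n (\<phi> x) (\<phi> b) (\<phi> e) (\<phi> f) \<longleftrightarrow> decomp S0 S m x b e f"
proof (cases "b \<in> S0")
  case True
  have "plus S0 m b \<in> S" "astar S0 m b \<in> S"
    using plus_idem_Rstar[OF ad True] astar_idem_Lstar[OF ad True] U by (auto simp: idems_def)
  thus ?thesis unfolding decomp_def using True S U
    by (simp add: image_mem_iff idems_image plus_image[OF U ad] astar_image[OF U ad]
        GreenL_image GreenR_image hom_rev closed eq_iff)
next
  case False
  thus ?thesis unfolding decomp_def using S U by (simp add: image_mem_iff)
qed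

lemma adequate_transversal_image:
  assumes at: "adequate_transversal S0 S m"
  shows "adequate_transversal (\<phi> ` S0) (\<phi> ` S) n"
proof -
  have ad: "adequate S0 m" and st: "star_subsemigroup S0 S m" and ab: "abundant S m"
    and ex1: "\<And>x. x \<in> S \<Longrightarrow> \<exists>!xb. \<exists>e f. decomp S0 S m x xb e f"
    using at unfolding adequate_transversal_def by blast+
  have U: "S0 \<subseteq> S" using st by (simp add: star_subsemigroup_def)
  have ex1_image: "\<exists>!xb'. \<exists>e' f'. decomp (\<phi> ` S0) (\<phi> ` S) n (\<phi> x) xb' e' f'"
    if x: "x \<in> S" for x
  proof -
    obtain b e f where d: "decomp S0 S m x b e f" using ex1[OF x] by blast
    have "b \<in> S" "e \<in> S" "f \<in> S" using d U unfolding decomp_def idems_def by auto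
    hence "decomp (\<phi> ` S0) (\<phi> ` S) n (\<phi> x) (\<phi> b) (\<phi> e) (\<phi> f)"
      using decomp_image[OF ad U x] d by simp
    moreover have "y' = \<phi> b" if d': "decomp (\<phi> ` S0) (\<phi> ` S) n (\<phi> x) y' e' f'" for y' e' f'
    proof -
      have "y' \<in> \<phi> ` S" "e' \<in> \<phi> ` S" "f' \<in> \<phi> ` S"
        using d' U unfolding decomp_def idems_def by auto
      then obtain b' e'' f'' where "b' \<in> S" "e'' \<in> S" "f'' \<in> S" "y' = \<phi> b'" "e' = \<phi> e''" "f' = \<phi> f''"
        by blast
      moreover have "decomp S0 S m x b' e'' f''"
        using decomp_image[OF ad U x] d' calculation by simp
      ultimately show ?thesis using ex1[OF x] d by blast
    qed
    ultimately show ?thesis by blast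
  qed
  show ?thesis unfolding adequate_transversal_def
  proof (intro conjI ballI abundant_image[OF subset_refl ab] adequate_image[OF U ad]
      star_subsemigroup_image[OF st])
    fix x' assume "x' \<in> \<phi> ` S"
    thus "\<exists>!xb'. \<exists>e' f'. decomp (\<phi> ` S0) (\<phi> ` S) n x' xb' e' f'" using ex1_image by blast
  qed
qed

lemma qi_adequate_transversal_image:
  assumes q: "qi_adequate_transversal S0 S m"
  shows "qi_adequate_transversal (\<phi> ` S0) (\<phi> ` S) n"
proof -
  have at: "adequate_transversal S0 S m" using q by (simp add: qi_adequate_transversal_def)
  hence U: "S0 \<subseteq> S" by (simp add: adequate_transversal_def star_subsemigroup_def)
  have "n (n (\<phi> a) (\<phi> s)) (\<phi> b) \<in> \<phi> ` S0" if "a \<in> S0" "s \<in> S" "b \<in> S0" for a s b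
  proof -
    have "m (m a s) b \<in> S0" using q that by (simp add: qi_adequate_transversal_def)
    moreover have "a \<in> S" "b \<in> S" using that U by auto
    hence "n (n (\<phi> a) (\<phi> s)) (\<phi> b) = \<phi> (m (m a s) b)"
      using that by (simp add: hom_rev closed)
    ultimately show ?thesis by simp
  qed
  thus ?thesis using adequate_transversal_image[OF at] by (auto simp: qi_adequate_transversal_def)
qed

lemma inv_into_sgrp_iso: "U \<subseteq> S \<Longrightarrow> sgrp U m \<Longrightarrow> sgrp_iso (inv_into S \<phi>) (\<phi> ` U) n U m"
proof -
  assume U: "U \<subseteq> S" and s: "sgrp U m"
  have injU: "inj_on \<phi> U" using inj U by (rule inj_on_subset)
  have inv: "inv_into S \<phi> (\<phi> x) = x" if "x \<in> S" for x using inv_into_f_f[OF inj that] .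
  have "bij_betw (inv_into U \<phi>) (\<phi> ` U) U"
    using injU by (intro bij_betw_inv_into) (simp add: bij_betw_def)
  moreover have "inv_into S \<phi> y = inv_into U \<phi> y" if "y \<in> \<phi> ` U" for y
    using that U inv inv_into_f_f[OF injU] by auto
  ultimately have "bij_betw (inv_into S \<phi>) (\<phi> ` U) U"
    using bij_betw_cong by metis
  moreover have "inv_into S \<phi> (n (\<phi> x) (\<phi> y)) = m (inv_into S \<phi> (\<phi> x)) (inv_into S \<phi> (\<phi> y))"
    if "x \<in> U" "y \<in> U" for x y
  proof -
    have "x \<in> S" "y \<in> S" "m x y \<in> S" using that U sgrp_closed[OF s] by auto
    thus ?thesis by (simp add: hom_rev inv)
  qed
  ultimately show ?thesis unfolding sgrp_iso_def by blast
qed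

end

section \<open>Quasi-ideal adequate transversals\<close>

lemma decomp_op_mult:
  "sgrp S m \<Longrightarrow> S0 \<subseteq> S \<Longrightarrow> decomp S0 S (op_mult m) x b e f = decomp S0 S m x b f e"
  unfolding decomp_def
  by (auto simp: idems_op_mult GreenL_op_mult GreenR_op_mult plus_op_mult astar_op_mult
      op_mult_def idems_def sgrp_assoc)

lemma tbar_op_mult: "sgrp S m \<Longrightarrow> S0 \<subseteq> S \<Longrightarrow> tbar S0 S (op_mult m) = tbar S0 S m"
  by (intro ext) (simp add: tbar_def decomp_op_mult, metis)

lemma te_op_mult: "sgrp S m \<Longrightarrow> S0 \<subseteq> S \<Longrightarrow> te S0 S (op_mult m) = tf S0 S m"
  by (intro ext) (simp add: te_def tf_def decomp_op_mult tbar_op_mult)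

lemma tf_op_mult: "sgrp S m \<Longrightarrow> S0 \<subseteq> S \<Longrightarrow> tf S0 S (op_mult m) = te S0 S m"
  by (intro ext) (simp add: te_def tf_def decomp_op_mult tbar_op_mult)

lemma adequate_transversal_op_mult:
  assumes "adequate_transversal S0 S m"
  shows "adequate_transversal S0 S (op_mult m)"
proof -
  have "sgrp S m" and "S0 \<subseteq> S"
    using assms by (auto simp: adequate_transversal_def abundant_def star_subsemigroup_def)
  then have "(\<exists>e f. decomp S0 S (op_mult m) x xb e f) = (\<exists>e f. decomp S0 S m x xb e f)" for x xb
    by (simp add: decomp_op_mult) blast
  then show ?thesis using assms unfolding adequate_transversal_def
    by (simp add: abundant_op_mult adequate_op_mult star_subsemigroup_op_mult)
qed

lemma qi_adequate_transversal_op_mult: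
  assumes "qi_adequate_transversal S0 S m"
  shows "qi_adequate_transversal S0 S (op_mult m)"
proof -
  have S: "sgrp S m" and S0: "S0 \<subseteq> S"
    using assms by (auto simp: qi_adequate_transversal_def adequate_transversal_def abundant_def
        star_subsemigroup_def)
  have "m b (m s a) \<in> S0" if "a \<in> S0" "s \<in> S" "b \<in> S0" for a s b
    using assms that S0 sgrp_assoc[OF S] unfolding qi_adequate_transversal_def by (metis subsetD)
  then show ?thesis
    using assms adequate_transversal_op_mult[of S0 S m]
    unfolding qi_adequate_transversal_def by (simp add: op_mult_def)
qed

locale qi_transversal =
  fixes S S0 :: "'a set" and m :: "'a \<Rightarrow> 'a \<Rightarrow> 'a"
  assumes qi_adequate_transversal: "qi_adequate_transversal S0 S m"
begin

abbreviation "plus0 \<equiv> plus S0 m"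
abbreviation "star0 \<equiv> astar S0 m"
abbreviation "bar \<equiv> tbar S0 S m"
abbreviation "e_of \<equiv> te S0 S m"
abbreviation "f_of \<equiv> tf S0 S m"

lemma adequate_transversal: "adequate_transversal S0 S m"
  using qi_adequate_transversal by (simp add: qi_adequate_transversal_def)

lemma S_sgrp: "sgrp S m"
  using adequate_transversal by (simp add: adequate_transversal_def abundant_def)

lemma S_closed [simp]: "x \<in> S \<Longrightarrow> y \<in> S \<Longrightarrow> m x y \<in> S"
  using S_sgrp by (simp add: sgrp_def)

lemma S_assoc: "x \<in> S \<Longrightarrow> y \<in> S \<Longrightarrow> z \<in> S \<Longrightarrow> m (m x y) z = m x (m y z)"
  using S_sgrp by (simp add: sgrp_def)

lemma S_assoc_subst: "m u v = w \<Longrightarrow> u \<in> S \<Longrightarrow> v \<in> S \<Longrightarrow> y \<in> S \<Longrightarrow> m u (m v y) = m w y"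
  by (simp add: S_assoc[symmetric])

lemma S0_adequate: "adequate S0 m"
  using adequate_transversal by (simp add: adequate_transversal_def)

lemma S0_star_subsemigroup: "star_subsemigroup S0 S m"
  using adequate_transversal by (simp add: adequate_transversal_def)

lemma S0_subset: "S0 \<subseteq> S"
  using S0_star_subsemigroup by (simp add: star_subsemigroup_def)

lemma S0_into_S [simp]: "a \<in> S0 \<Longrightarrow> a \<in> S"
  using S0_subset by blast

lemma S0_sgrp: "sgrp S0 m"
  using S0_adequate by (simp add: adequate_def abundant_def)

lemma S0_closed [simp]: "x \<in> S0 \<Longrightarrow> y \<in> S0 \<Longrightarrow> m x y \<in> S0"
  using S0_sgrp by (simp add: sgrp_def)

lemma S0_quasi_ideal: "a \<in> S0 \<Longrightarrow> s \<in> S \<Longrightarrow> b \<in> S0 \<Longrightarrow> m (m a s) b \<in> S0"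
  using qi_adequate_transversal by (simp add: qi_adequate_transversal_def)

lemma ex1_decomp: "x \<in> S \<Longrightarrow> \<exists>!xb. \<exists>e f. decomp S0 S m x xb e f"
  using adequate_transversal by (simp add: adequate_transversal_def)

lemma qi_transversal_op_mult: "qi_transversal S S0 (op_mult m)"
  using qi_adequate_transversal_op_mult[OF qi_adequate_transversal] by unfold_locales

lemma plus0_in [simp]: "a \<in> S0 \<Longrightarrow> plus0 a \<in> S0"
  using plus_idem_Rstar[OF S0_adequate] by (simp add: idems_def)

lemma star0_in [simp]: "a \<in> S0 \<Longrightarrow> star0 a \<in> S0"
  using astar_idem_Lstar[OF S0_adequate] by (simp add: idems_def)

lemma plus0_idem [simp]: "a \<in> S0 \<Longrightarrow> m (plus0 a) (plus0 a) = plus0 a"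
  using plus_idem_Rstar[OF S0_adequate] by (simp add: idems_def)

lemma star0_idem [simp]: "a \<in> S0 \<Longrightarrow> m (star0 a) (star0 a) = star0 a"
  using astar_idem_Lstar[OF S0_adequate] by (simp add: idems_def)

lemma plus0_Rstar: "a \<in> S0 \<Longrightarrow> Rstar S m a (plus0 a)"
  using S0_star_subsemigroup plus_idem_Rstar[OF S0_adequate] by (simp add: star_subsemigroup_def)

lemma star0_Lstar: "a \<in> S0 \<Longrightarrow> Lstar S m a (star0 a)"
  using S0_star_subsemigroup astar_idem_Lstar[OF S0_adequate] by (simp add: star_subsemigroup_def)

lemma plus0_absorb [simp]: "a \<in> S0 \<Longrightarrow> m (plus0 a) a = a"
  by (meson Rstar_idem_absorb plus_idem_Rstar[OF S0_adequate])

lemma star0_absorb [simp]: "a \<in> S0 \<Longrightarrow> m a (star0 a) = a"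
  by (meson Lstar_idem_absorb astar_idem_Lstar[OF S0_adequate])

lemma plus0_absorb_mult: "a \<in> S0 \<Longrightarrow> y \<in> S \<Longrightarrow> m (plus0 a) (m a y) = m a y"
  by (simp add: S_assoc[symmetric])

lemma star0_absorb_mult: "a \<in> S0 \<Longrightarrow> y \<in> S \<Longrightarrow> m a (m (star0 a) y) = m a y"
  by (simp add: S_assoc[symmetric])

lemma S0_idems_commute: "g \<in> S0 \<Longrightarrow> m g g = g \<Longrightarrow> h \<in> S0 \<Longrightarrow> m h h = h \<Longrightarrow> m g h = m h g"
  using S0_adequate unfolding adequate_def idems_def by blast

lemma plus0_of_idem: "g \<in> S0 \<Longrightarrow> m g g = g \<Longrightarrow> plus0 g = g"
  using plus_of_idem[OF S0_adequate] by (simp add: idems_def)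

lemma star0_of_idem: "g \<in> S0 \<Longrightarrow> m g g = g \<Longrightarrow> star0 g = g"
  using astar_of_idem[OF S0_adequate] by (simp add: idems_def)

lemma plus0_plus0 [simp]: "a \<in> S0 \<Longrightarrow> plus0 (plus0 a) = plus0 a"
  by (simp add: plus0_of_idem)

lemma star0_star0 [simp]: "a \<in> S0 \<Longrightarrow> star0 (star0 a) = star0 a"
  by (simp add: star0_of_idem)

lemma GreenL_iff:
  "e \<in> S \<Longrightarrow> m e e = e \<Longrightarrow> g \<in> S \<Longrightarrow> m g g = g \<Longrightarrow> GreenL S m e g \<longleftrightarrow> m e g = e \<and> m g e = g"
  using GreenL_idems_iff[OF S_sgrp] by (simp add: idems_def)

lemma GreenR_iff:
  "e \<in> S \<Longrightarrow> m e e = e \<Longrightarrow> g \<in> S \<Longrightarrow> m g g = g \<Longrightarrow> GreenR S m e g \<longleftrightarrow> m e g = g \<and> m g e = e"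
  using GreenR_idems_iff[OF S_sgrp] by (simp add: idems_def)

lemma decompD:
  "decomp S0 S m x b e f \<Longrightarrow> b \<in> S0 \<and> e \<in> S \<and> f \<in> S \<and> m e e = e \<and> m f f = f \<and>
   x = m (m e b) f \<and> m e (plus0 b) = e \<and> m (plus0 b) e = plus0 b \<and>
   m f (star0 b) = star0 b \<and> m (star0 b) f = f"
  unfolding decomp_def using GreenL_iff[of e "plus0 b"] GreenR_iff[of f "star0 b"]
  by (auto simp: idems_def)

lemma decompI:
  "b \<in> S0 \<Longrightarrow> e \<in> S \<Longrightarrow> f \<in> S \<Longrightarrow> m e e = e \<Longrightarrow> m f f = f \<Longrightarrow>
   m e (plus0 b) = e \<Longrightarrow> m (plus0 b) e = plus0 b \<Longrightarrow>
   m f (star0 b) = star0 b \<Longrightarrow> m (star0 b) f = f \<Longrightarrow>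
   decomp S0 S m (m (m e b) f) b e f"
  unfolding decomp_def using GreenL_iff[of e "plus0 b"] GreenR_iff[of f "star0 b"]
  by (auto simp: idems_def)

text \<open>Right multiplication by \<open>b\<^sup>*\<close> strips \<open>f\<close> off \<open>x = e b f\<close>, and \<open>e b\<close> determines \<open>e = e b\<^sup>+\<close>
  because \<open>b \<R>\<^sup>* b\<^sup>+\<close>.\<close>
lemma decomp_left_unique: "decomp S0 S m x b e f \<Longrightarrow> decomp S0 S m x b e' f' \<Longrightarrow> e = e'"
proof -
  assume d: "decomp S0 S m x b e f" and d': "decomp S0 S m x b e' f'"
  have strip: "m x (star0 b) = m e b"
    if "x = m (m e b) f" "b \<in> S0" "e \<in> S" "f \<in> S" "m f (star0 b) = star0 b" for e f
    using that by (simp add: S_assoc)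
  have "m e b = m e' b"
    using strip[of e f] strip[of e' f'] decompD[OF d] decompD[OF d'] by metis
  hence "lmul m (Some e) (plus0 b) = lmul m (Some e') (plus0 b)"
    using Rstar_cancel[OF plus0_Rstar, of b "Some e" "Some e'"] decompD[OF d] decompD[OF d'] by simp
  thus ?thesis using decompD[OF d] decompD[OF d'] by simp
qed

lemma decomp_bar_e_of: "decomp S0 S m x b e f \<Longrightarrow> bar x = b \<and> e_of x = e"
proof -
  assume d: "decomp S0 S m x b e f"
  have "x \<in> S" using decompD[OF d] by simp
  hence "bar x = b" unfolding tbar_def using ex1_decomp d by (intro the1_equality) auto
  moreover have "(THE e. \<exists>f. decomp S0 S m x b e f) = e"
    using d decomp_left_unique by blast
  ultimately show ?thesis by (simp add: te_def)
qed

lemma decomp_unique: "decomp S0 S m x b e f \<Longrightarrow> bar x = b \<and> e_of x = e \<and> f_of x = f"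
proof -
  assume d: "decomp S0 S m x b e f"
  have "decomp S0 S (op_mult m) x b f e" using d by (simp add: decomp_op_mult[OF S_sgrp S0_subset])
  from qi_transversal.decomp_bar_e_of[OF qi_transversal_op_mult this] show ?thesis
    using decomp_bar_e_of[OF d] by (simp add: te_op_mult[OF S_sgrp S0_subset])
qed

lemma decomp_canonical: "x \<in> S \<Longrightarrow> decomp S0 S m x (bar x) (e_of x) (f_of x)"
  using ex1_decomp decomp_unique by metis

lemma canonical_decompD:
  "x \<in> S \<Longrightarrow> bar x \<in> S0 \<and> e_of x \<in> S \<and> f_of x \<in> S \<and> m (e_of x) (e_of x) = e_of x \<and>
   m (f_of x) (f_of x) = f_of x \<and> x = m (m (e_of x) (bar x)) (f_of x) \<and>
   m (e_of x) (plus0 (bar x)) = e_of x \<and> m (plus0 (bar x)) (e_of x) = plus0 (bar x) \<and>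
   m (f_of x) (star0 (bar x)) = star0 (bar x) \<and> m (star0 (bar x)) (f_of x) = f_of x"
  using decompD[OF decomp_canonical] .

lemma bar_in_S0: "x \<in> S \<Longrightarrow> bar x \<in> S0"
  using canonical_decompD by blast

lemma e_of_props:
  "x \<in> S \<Longrightarrow> e_of x \<in> S \<and> m (e_of x) (e_of x) = e_of x \<and>
   m (e_of x) (plus0 (bar x)) = e_of x \<and> m (plus0 (bar x)) (e_of x) = plus0 (bar x)"
  using canonical_decompD by blast

lemma f_of_props:
  "x \<in> S \<Longrightarrow> f_of x \<in> S \<and> m (f_of x) (f_of x) = f_of x \<and>
   m (f_of x) (star0 (bar x)) = star0 (bar x) \<and> m (star0 (bar x)) (f_of x) = f_of x"
  using canonical_decompD by blast

lemma canonical_decomp_eq: "x \<in> S \<Longrightarrow> m (m (e_of x) (bar x)) (f_of x) = x"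
  using canonical_decompD by metis

lemma decomp_of_S0: "a \<in> S0 \<Longrightarrow> bar a = a \<and> e_of a = plus0 a \<and> f_of a = star0 a"
proof -
  assume a: "a \<in> S0"
  have "decomp S0 S m (m (m (plus0 a) a) (star0 a)) a (plus0 a) (star0 a)"
    by (rule decompI) (use a in \<open>simp_all add: S0_idems_commute[of "plus0 a" "star0 a"]\<close>)
  thus ?thesis using a decomp_unique by simp
qed

text \<open>Right multiplication by \<open>(x\<^sup>-)\<^sup>*\<close> strips \<open>f\<^sub>x\<close> off \<open>x\<close>, and \<open>x\<^sup>- \<R>\<^sup>* (x\<^sup>-)\<^sup>+\<close> lets us
  cancel \<open>x\<^sup>-\<close> against \<open>(x\<^sup>-)\<^sup>+\<close>.\<close>
lemma Rstar_e_of: "x \<in> S \<Longrightarrow> Rstar S m x (e_of x)"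
proof -
  assume x: "x \<in> S"
  define a e f where "a = bar x" and "e = e_of x" and "f = f_of x"
  have D: "a \<in> S0" "e \<in> S" "f \<in> S" "x = m (m e a) f" "m e (plus0 a) = e" "m f (star0 a) = star0 a"
    using canonical_decompD[OF x] unfolding a_def e_def f_def by auto
  have left_x: "lmul m s x = m (m (lmul m s e) a) f" if "s \<in> one_adj S" for s
    using that D by (simp add: lmul_assoc[OF S_sgrp] lmul_closed[OF S_sgrp] S_assoc)
  have strip: "m (m (m y a) f) (star0 a) = m y a" if "y \<in> S" for y
    using that D by (simp add: S_assoc)
  have left_e: "m (lmul m u e) (plus0 a) = lmul m u e" if "u \<in> one_adj S" for u
    using lmul_assoc[OF S_sgrp that D(2) S0_into_S[OF plus0_in[OF D(1)]]] D(5) by simp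
  show ?thesis unfolding Rstar_def
  proof (intro conjI ballI iffI)
    fix s t assume st: "s \<in> one_adj S" "t \<in> one_adj S"
    have ls: "lmul m s e \<in> S" "lmul m t e \<in> S" using st D lmul_closed[OF S_sgrp] by auto
    {
      assume "lmul m s x = lmul m t x"
      hence "m (m (lmul m s e) a) f = m (m (lmul m t e) a) f" using left_x st by simp
      hence "m (lmul m s e) a = m (lmul m t e) a" using strip ls by metis
      hence "lmul m (Some (lmul m s e)) (plus0 a) = lmul m (Some (lmul m t e)) (plus0 a)"
        using Rstar_cancel[OF plus0_Rstar[OF D(1)], of "Some (lmul m s e)" "Some (lmul m t e)"] ls
        by simp
      thus "lmul m s (e_of x) = lmul m t (e_of x)" using st left_e by (simp add: e_def[symmetric])
    }
    {
      assume "lmul m s (e_of x) = lmul m t (e_of x)"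
      thus "lmul m s x = lmul m t x" using left_x st by (simp add: e_def[symmetric])
    }
  qed (use x e_of_props[OF x] in auto)
qed

lemma Lstar_f_of: "x \<in> S \<Longrightarrow> Lstar S m x (f_of x)"
  using qi_transversal.Rstar_e_of[OF qi_transversal_op_mult]
  by (simp add: Rstar_op_mult te_op_mult[OF S_sgrp S0_subset])

lemma plus0_quasi_ideal_le:
  assumes "a \<in> S0" "y \<in> S" "c \<in> S0"
  shows "m (plus0 a) (plus0 (m (m a y) c)) = plus0 (m (m a y) c) \<and>
         m (plus0 (m (m a y) c)) (plus0 a) = plus0 (m (m a y) c)"
proof -
  have d: "m (m a y) c \<in> S0" using assms S0_quasi_ideal by simp
  have "m (plus0 a) (m (m a y) c) = m (m a y) c" using assms by (simp add: S_assoc plus0_absorb_mult)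
  hence "m (plus0 a) (plus0 (m (m a y) c)) = plus0 (m (m a y) c)"
    using Rstar_cancel[OF plus0_Rstar[OF d], of "Some (plus0 a)" None] assms by simp
  thus ?thesis using S0_idems_commute[of "plus0 a" "plus0 (m (m a y) c)"] assms d by simp
qed

lemma star0_quasi_ideal_le:
  assumes "a \<in> S0" "y \<in> S" "c \<in> S0"
  shows "m (star0 (m (m a y) c)) (star0 c) = star0 (m (m a y) c) \<and>
         m (star0 c) (star0 (m (m a y) c)) = star0 (m (m a y) c)"
proof -
  have d: "m (m a y) c \<in> S0" using assms S0_quasi_ideal by simp
  have "m (m (m a y) c) (star0 c) = m (m a y) c" using assms by (simp add: S_assoc)
  hence "m (star0 (m (m a y) c)) (star0 c) = star0 (m (m a y) c)"
    using Lstar_cancel[OF star0_Lstar[OF d], of "Some (star0 c)" None] assms by simp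
  thus ?thesis using S0_idems_commute[of "star0 c" "star0 (m (m a y) c)"] assms d by simp
qed

text \<open>With \<open>d = x\<^sup>- f\<^sub>x e\<^sub>z z\<^sup>-\<close>, we have \<open>x z = e\<^sub>x d f\<^sub>z = (e\<^sub>x d\<^sup>+) d (d\<^sup>* f\<^sub>z)\<close>, and the corrected
  idempotents are \<open>\<L>\<close>- resp. \<open>\<R>\<close>-related to \<open>d\<^sup>+\<close> resp. \<open>d\<^sup>*\<close> because \<open>d\<^sup>+ \<le> (x\<^sup>-)\<^sup>+\<close> and
  \<open>d\<^sup>* \<le> (z\<^sup>-)\<^sup>*\<close>.\<close>
lemma decomp_mult:
  assumes x: "x \<in> S" and z: "z \<in> S"
  defines "d \<equiv> m (m (bar x) (m (f_of x) (e_of z))) (bar z)"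
  shows "bar (m x z) = d \<and> e_of (m x z) = m (e_of x) (plus0 d) \<and> f_of (m x z) = m (star0 d) (f_of z)"
proof -
  obtain a e f c e' f' where abbr: "a = bar x" "e = e_of x" "f = f_of x"
    "c = bar z" "e' = e_of z" "f' = f_of z"
    by blast
  have X: "a \<in> S0" "e \<in> S" "f \<in> S" "m e e = e" "x = m (m e a) f" "m (plus0 a) e = plus0 a"
    using canonical_decompD[OF x] abbr by auto
  have Z: "c \<in> S0" "e' \<in> S" "f' \<in> S" "m f' f' = f'" "z = m (m e' c) f'" "m f' (star0 c) = star0 c"
    using canonical_decompD[OF z] abbr by auto
  have d_def': "d = m (m a (m f e')) c" using abbr d_def by simp
  have d0: "d \<in> S0" unfolding d_def' using X Z by (simp add: S0_quasi_ideal)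
  define D D' where "D = plus0 d" and "D' = star0 d"
  have DD: "D \<in> S0" "D' \<in> S0" "m D D = D" "m D' D' = D'" "m D d = d" "m d D' = d"
    using d0 D_def D'_def by auto
  have "m D (plus0 a) = D"
    using plus0_quasi_ideal_le[of a "m f e'" c] X Z d_def' D_def by simp
  hence De: "m D e = D" using S_assoc_subst[of D "plus0 a" D e] X DD by simp
  have "m (star0 c) D' = D'"
    using star0_quasi_ideal_le[of a "m f e'" c] X Z d_def' D'_def by simp
  hence fD': "m f' D' = D'" using S_assoc_subst[OF Z(6), of D'] Z DD by simp
  define E F where "E = m e D" and "F = m D' f'"
  have E: "E \<in> S" "m E E = E" "m E D = E" "m D E = D"
    unfolding E_def using X DD De by (simp_all add: S_assoc S_assoc_subst[OF De])
  have F: "F \<in> S" "m F F = F" "m F D' = D'" "m D' F = F"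
    unfolding F_def using Z DD fD' by (simp_all add: S_assoc S_assoc_subst[OF fD'] S_assoc_subst[OF DD(4)])
  have "decomp S0 S m (m (m E d) F) d E F"
    by (rule decompI) (use d0 E F D_def D'_def in auto)
  moreover have "m (m E d) F = m x z"
  proof -
    have "m (m E d) F = m e (m d f')" unfolding E_def F_def using X Z DD d0
      by (simp add: S_assoc S_assoc_subst[OF DD(5)] S_assoc_subst[OF DD(6)])
    also have "\<dots> = m x z" unfolding d_def' using X Z by (simp add: S_assoc)
    finally show ?thesis .
  qed
  ultimately have "decomp S0 S m (m x z) d E F" by simp
  thus ?thesis using decomp_unique E_def F_def D_def D'_def abbr by simp
qed

section \<open>The left adequate subsemigroup \<open>L\<close> and the right adequate subsemigroup \<open>R\<close>\<close>

abbreviation "Lset \<equiv> {x \<in> S. f_of x = f_of (bar x)}"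
abbreviation "Rset \<equiv> {x \<in> S. e_of x = e_of (bar x)}"

lemma Lset_iff: "x \<in> Lset \<longleftrightarrow> x \<in> S \<and> f_of x = star0 (bar x)"
  using bar_in_S0 decomp_of_S0 by auto

lemma Lset_mult_closed: "x \<in> Lset \<Longrightarrow> z \<in> Lset \<Longrightarrow> m x z \<in> Lset"
proof -
  assume "x \<in> Lset" "z \<in> Lset"
  hence x: "x \<in> S" and z: "z \<in> S" "f_of z = star0 (bar z)" using Lset_iff by auto
  have "m (star0 (m (m (bar x) (m (f_of x) (e_of z))) (bar z))) (star0 (bar z)) =
        star0 (m (m (bar x) (m (f_of x) (e_of z))) (bar z))"
    using star0_quasi_ideal_le canonical_decompD[OF x] canonical_decompD[OF z(1)] by simp
  thus ?thesis using decomp_mult[OF x z(1)] x z Lset_iff by simp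
qed

lemma decomp_e_of:
  "x \<in> S \<Longrightarrow> bar (e_of x) = plus0 (bar x) \<and> e_of (e_of x) = e_of x \<and> f_of (e_of x) = plus0 (bar x)"
proof -
  assume x: "x \<in> S"
  have "decomp S0 S m (m (m (e_of x) (plus0 (bar x))) (plus0 (bar x))) (plus0 (bar x)) (e_of x) (plus0 (bar x))"
    by (rule decompI) (use canonical_decompD[OF x] in \<open>auto simp: star0_of_idem\<close>)
  thus ?thesis using decomp_unique canonical_decompD[OF x] by simp
qed

lemma e_of_in_Lset: "x \<in> S \<Longrightarrow> e_of x \<in> Lset"
  using decomp_e_of canonical_decompD Lset_iff by (simp add: star0_of_idem)

lemma star0_in_Lset: "a \<in> S0 \<Longrightarrow> star0 a \<in> Lset"
  using Lset_iff decomp_of_S0 by simp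

lemma Lset_idemD:
  assumes "g \<in> Lset" "m g g = g"
  shows "e_of g = g \<and> bar g \<in> S0 \<and> m (bar g) (bar g) = bar g"
proof -
  have g: "g \<in> S" and f: "f_of g = star0 (bar g)" using assms(1) Lset_iff by auto
  define b where "b = bar g"
  have b: "b \<in> S0" using bar_in_S0[OF g] b_def by simp
  have Lg: "Lstar S m g (star0 b)" using Lstar_f_of[OF g] f b_def by simp
  have g_star: "m g (star0 b) = g" using Lstar_idem_absorb[OF Lg] b by (simp add: idemsI)
  have star_g: "m (star0 b) g = star0 b"
    using Lstar_idem_absorb[OF Lstar_sym[OF Lg]] assms(2) g by (simp add: idemsI)
  have "decomp S0 S m (m (m g (star0 b)) (star0 b)) (star0 b) g (star0 b)"
    by (rule decompI) (use b g assms(2) g_star star_g in \<open>auto simp: plus0_of_idem\<close>)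
  hence "bar g = star0 b \<and> e_of g = g" using decomp_unique g_star by simp
  thus ?thesis using b_def b star0_idem[OF b] by metis
qed

text \<open>The element \<open>p = \<alpha> e' \<alpha>'\<close> of \<open>S\<^sup>0\<close> satisfies \<open>p\<^sup>+ = \<alpha>\<close>, \<open>p\<^sup>* = \<alpha>'\<close>
  and \<open>e' = e p \<alpha>'\<close>; by uniqueness of the factorization of \<open>e'\<close>, whose transversal component is
  also \<open>\<alpha>'\<close>, we get \<open>p = \<alpha>'\<close>, hence \<open>\<alpha> = \<alpha>'\<close>.\<close>
lemma GreenR_idems_eq:
  assumes e: "e \<in> S" "m e e = e" and e': "e' \<in> S" "m e' e' = e'"
    and \<alpha>: "\<alpha> \<in> S0" "m \<alpha> \<alpha> = \<alpha>" and \<alpha>': "\<alpha>' \<in> S0" "m \<alpha>' \<alpha>' = \<alpha>'"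
    and L: "m e \<alpha> = e" "m \<alpha> e = \<alpha>" "m e' \<alpha>' = e'" "m \<alpha>' e' = \<alpha>'"
    and R: "m e e' = e'" "m e' e = e"
  shows "e = e'"
proof -
  define p q where "p = m (m \<alpha> e') \<alpha>'" and "q = m (m \<alpha>' e) \<alpha>"
  have pq0: "p \<in> S0" "q \<in> S0" using p_def q_def S0_quasi_ideal e e' \<alpha> \<alpha>' by auto
  have pq: "m p q = \<alpha>" unfolding p_def q_def using e e' \<alpha> \<alpha>' L R
    by (simp add: S_assoc S_assoc_subst[OF \<alpha>'(2)] S_assoc_subst[OF L(3)] S_assoc_subst[OF R(2)]
        S_assoc_subst[OF L(2)])
  have qp: "m q p = \<alpha>'" unfolding p_def q_def using e e' \<alpha> \<alpha>' L R
    by (simp add: S_assoc S_assoc_subst[OF \<alpha>(2)] S_assoc_subst[OF L(1)] S_assoc_subst[OF R(1)]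
        S_assoc_subst[OF L(4)])
  have "m \<alpha> p = p" "m p \<alpha>' = p" unfolding p_def using \<alpha> \<alpha>' e'
    by (simp_all add: S_assoc S_assoc_subst[OF \<alpha>(2)])
  hence "Rstar S0 m p \<alpha>" "Lstar S0 m p \<alpha>'"
    using Rstar_by_factors[OF S0_sgrp pq0(1) \<alpha>(1) pq0(2) _ pq]
      Lstar_by_factors[OF S0_sgrp pq0(1) \<alpha>'(1) pq0(2) _ qp] by auto
  hence plus_p: "plus0 p = \<alpha>" and star_p: "star0 p = \<alpha>'"
    using plus_eqI[OF S0_adequate] astar_eqI[OF S0_adequate] \<alpha> \<alpha>' by (simp_all add: idemsI)
  have "m (m e p) \<alpha>' = e'" unfolding p_def using e e' \<alpha> \<alpha>' L R
    by (simp add: S_assoc S_assoc_subst[OF \<alpha>'(2)] S_assoc_subst[OF L(3)] S_assoc_subst[OF L(1)])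
  moreover have "decomp S0 S m (m (m e p) \<alpha>') p e \<alpha>'"
    by (rule decompI) (use pq0 e \<alpha> \<alpha>' L plus_p star_p in auto)
  ultimately have "bar e' = p" using decomp_unique by metis
  moreover have "decomp S0 S m (m (m e' \<alpha>') \<alpha>') \<alpha>' e' \<alpha>'"
    by (rule decompI) (use e' \<alpha>' L in \<open>auto simp: plus0_of_idem star0_of_idem\<close>)
  hence "bar e' = \<alpha>'" using decomp_unique L by simp
  ultimately have "\<alpha> = \<alpha>'" using plus_p \<alpha>' by (simp add: plus0_of_idem)
  have "e = m e \<alpha>" using L by simp
  also have "\<dots> = m e (m \<alpha> e')" using L \<open>\<alpha> = \<alpha>'\<close> by simp
  also have "\<dots> = m e e'" using e e' \<alpha> L by (simp add: S_assoc[symmetric])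
  finally show ?thesis using R by simp
qed

lemma Lset_sgrp: "sgrp Lset m"
  unfolding sgrp_def using Lset_mult_closed by (auto simp: S_assoc)

lemma Rstar_Lset_e_of:
  assumes "x \<in> Lset"
  shows "Rstar Lset m x (e_of x)"
proof -
  have "x \<in> S" using assms by simp
  thus ?thesis using Rstar_restrict[OF Rstar_e_of _ assms e_of_in_Lset] by blast
qed

lemma e_of_idems_Lset: "x \<in> S \<Longrightarrow> e_of x \<in> idems Lset m"
  using idemsI[OF e_of_in_Lset] e_of_props by blast

lemma star0_idems_Lset: "a \<in> S0 \<Longrightarrow> star0 a \<in> idems Lset m"
  using idemsI[OF star0_in_Lset] star0_idem by blast

lemma Lstar_Lset_star0:
  assumes "x \<in> Lset"
  shows "Lstar Lset m x (star0 (bar x))"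
proof -
  have x: "x \<in> S" "f_of x = star0 (bar x)" using assms Lset_iff by auto
  hence "Lstar S m x (star0 (bar x))" using Lstar_f_of by metis
  thus ?thesis using Lstar_restrict[OF _ _ assms star0_in_Lset[OF bar_in_S0[OF x(1)]]] by blast
qed

lemma abundant_Lset: "abundant Lset m"
  unfolding abundant_def
proof (intro conjI ballI Lset_sgrp)
  fix x assume x: "x \<in> Lset"
  have "x \<in> S" using x by simp
  thus "\<exists>e\<in>idems Lset m. Rstar Lset m x e"
    using Rstar_Lset_e_of[OF x] e_of_idems_Lset by blast
  show "\<exists>f\<in>idems Lset m. Lstar Lset m x f"
    using Lstar_Lset_star0[OF x] star0_idems_Lset bar_in_S0 \<open>x \<in> S\<close> by blast
qed

lemma Lset_Rstar_idems_eq: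
  assumes g: "g \<in> idems Lset m" and h: "h \<in> idems Lset m" and gh: "Rstar Lset m g h"
  shows "g = h"
proof -
  have "g \<in> Lset" "m g g = g" "h \<in> Lset" "m h h = h" using g h by (simp_all add: idems_def)
  note G = this(1,2) Lset_idemD[OF this(1,2)] and H = this(3,4) Lset_idemD[OF this(3,4)]
  have "m g (bar g) = g" "m (bar g) g = bar g"
    using e_of_props[of g] G by (simp_all add: plus0_of_idem)
  moreover have "m h (bar h) = h" "m (bar h) h = bar h"
    using e_of_props[of h] H by (simp_all add: plus0_of_idem)
  moreover have "m g h = h" "m h g = g"
    using Rstar_idem_absorb[OF Rstar_sym[OF gh] g] Rstar_idem_absorb[OF gh h] .
  ultimately show ?thesis using GreenR_idems_eq[of g h "bar g" "bar h"] G H by simp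
qed

lemma left_adequate_Lset: "left_adequate Lset m"
  unfolding left_adequate_def
proof (intro conjI abundant_Lset ballI)
  fix x assume x: "x \<in> Lset"
  have "e_of x \<in> idems Lset m" using e_of_idems_Lset x by simp
  moreover have "e = e_of x" if "e \<in> idems Lset m" "Rstar Lset m x e" for e
    using Lset_Rstar_idems_eq[OF calculation that(1) Rstar_trans[OF Rstar_sym[OF Rstar_Lset_e_of[OF x]] that(2)]]
    by simp
  ultimately show "\<exists>!e. e \<in> idems Lset m \<and> Rstar Lset m x e"
    using Rstar_Lset_e_of[OF x] by blast
qed

lemma right_adequate_Rset: "right_adequate Rset m"
  using qi_transversal.left_adequate_Lset[OF qi_transversal_op_mult]
  unfolding tf_op_mult[OF S_sgrp S0_subset] tbar_op_mult[OF S_sgrp S0_subset] left_adequate_op_mult .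

section \<open>The isomorphism of \<open>S\<close> onto \<open>T\<close>\<close>

definition to_T :: "'a \<Rightarrow> 'a \<times> 'a" where
  "to_T x = (m (e_of x) (bar x), m (bar x) (f_of x))"

abbreviation "Tset \<equiv> {(x, a). x \<in> Lset \<and> a \<in> Rset \<and> bar x = bar a}"
abbreviation "mT \<equiv> (\<lambda>(x, a) (y, b). (m (m (e_of x) a) y, m (m a y) (f_of b)))"

lemma decomp_e_of_bar:
  "x \<in> S \<Longrightarrow> bar (m (e_of x) (bar x)) = bar x \<and> e_of (m (e_of x) (bar x)) = e_of x \<and>
   f_of (m (e_of x) (bar x)) = star0 (bar x)"
proof -
  assume x: "x \<in> S"
  note E = e_of_props[OF x] and b = bar_in_S0[OF x]
  have "decomp S0 S m (m (m (e_of x) (bar x)) (star0 (bar x))) (bar x) (e_of x) (star0 (bar x))"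
    by (rule decompI) (use E b in auto)
  moreover have "m (m (e_of x) (bar x)) (star0 (bar x)) = m (e_of x) (bar x)"
    using E b by (simp add: S_assoc)
  ultimately show ?thesis using decomp_unique by metis
qed

lemma decomp_bar_f_of:
  "x \<in> S \<Longrightarrow> bar (m (bar x) (f_of x)) = bar x \<and> e_of (m (bar x) (f_of x)) = plus0 (bar x) \<and>
   f_of (m (bar x) (f_of x)) = f_of x"
proof -
  assume x: "x \<in> S"
  note F = f_of_props[OF x] and b = bar_in_S0[OF x]
  have "decomp S0 S m (m (m (plus0 (bar x)) (bar x)) (f_of x)) (bar x) (plus0 (bar x)) (f_of x)"
    by (rule decompI) (use F b in auto)
  moreover have "m (m (plus0 (bar x)) (bar x)) (f_of x) = m (bar x) (f_of x)" using b by simp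
  ultimately show ?thesis using decomp_unique by metis
qed

lemma to_T_in: "x \<in> S \<Longrightarrow> to_T x \<in> Tset"
  using decomp_e_of_bar decomp_bar_f_of e_of_props f_of_props bar_in_S0 decomp_of_S0
  by (simp add: to_T_def)

lemma to_T_inj: "inj_on to_T S"
proof (rule inj_onI)
  fix x y assume x: "x \<in> S" and y: "y \<in> S" and eq: "to_T x = to_T y"
  hence "m (e_of x) (bar x) = m (e_of y) (bar y)" and "m (bar x) (f_of x) = m (bar y) (f_of y)"
    by (simp_all add: to_T_def)
  hence "bar x = bar y" "e_of x = e_of y" "f_of x = f_of y"
    using decomp_e_of_bar[OF x] decomp_e_of_bar[OF y] decomp_bar_f_of[OF x] decomp_bar_f_of[OF y]
    by metis+
  thus "x = y" using canonical_decomp_eq[OF x] canonical_decomp_eq[OF y] by metis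
qed

text \<open>A pair \<open>(y, b)\<close> over \<open>c = y\<^sup>- = b\<^sup>-\<close> comes from \<open>e\<^sub>y c f\<^sub>b\<close>, since \<open>y = e\<^sub>y c\<close> and \<open>b = c f\<^sub>b\<close>.\<close>
lemma Tset_subset_to_T_image: "Tset \<subseteq> to_T ` S"
proof
  fix p assume "p \<in> Tset"
  then obtain y b where p: "p = (y, b)" and y: "y \<in> S" "f_of y = star0 (bar y)"
    and b: "b \<in> S" "e_of b = plus0 (bar b)" and yb: "bar y = bar b"
    using bar_in_S0 decomp_of_S0 by force
  define c where "c = bar y"
  have c: "c \<in> S0" using bar_in_S0[OF y(1)] c_def by simp
  note E = e_of_props[OF y(1)] and F = f_of_props[OF b(1)]
  define x where "x = m (m (e_of y) c) (f_of b)"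
  have "decomp S0 S m x c (e_of y) (f_of b)"
    unfolding x_def by (rule decompI) (use E F c c_def yb in auto)
  hence D: "bar x = c" "e_of x = e_of y" "f_of x = f_of b" using decomp_unique by auto
  have "x \<in> S" unfolding x_def using E F c by simp
  have "y = m (m (e_of y) c) (star0 c)" using canonical_decomp_eq[OF y(1)] y(2) c_def by simp
  also have "\<dots> = m (e_of y) c" using E c by (simp add: S_assoc)
  finally have "y = m (e_of y) c" .
  moreover have "b = m (m (plus0 c) c) (f_of b)" using canonical_decomp_eq[OF b(1)] b(2) yb c_def by simp
  hence "b = m c (f_of b)" using c by simp
  ultimately have "to_T x = p" using D p by (simp add: to_T_def)
  thus "p \<in> to_T ` S" using \<open>x \<in> S\<close> by blast
qed

lemma to_T_image: "to_T ` S = Tset"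
  by (rule subset_antisym[OF image_subsetI[OF to_T_in] Tset_subset_to_T_image])

lemma to_T_mult: "x \<in> S \<Longrightarrow> z \<in> S \<Longrightarrow> to_T (m x z) = mT (to_T x) (to_T z)"
proof -
  assume x: "x \<in> S" and z: "z \<in> S"
  define d where "d = m (m (bar x) (m (f_of x) (e_of z))) (bar z)"
  note E = e_of_props[OF x] e_of_props[OF z] and F = f_of_props[OF x] f_of_props[OF z]
    and B = bar_in_S0[OF x] bar_in_S0[OF z]
  have d: "d \<in> S0" unfolding d_def using B E F by (simp add: S0_quasi_ideal)
  have "to_T (m x z) = (m (m (e_of x) (plus0 d)) d, m d (m (star0 d) (f_of z)))"
    using decomp_mult[OF x z] d_def by (simp add: to_T_def)
  also have "\<dots> = (m (e_of x) d, m d (f_of z))" using d E F by (simp add: S_assoc star0_absorb_mult)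
  also have "\<dots> = mT (to_T x) (to_T z)" unfolding d_def
    using decomp_e_of_bar[OF x] decomp_bar_f_of[OF z] E F B by (simp add: to_T_def S_assoc)
  finally show ?thesis .
qed

lemma to_T_sgrp_iso: "sgrp_iso to_T S m Tset mT"
  unfolding sgrp_iso_def bij_betw_def by (intro conjI ballI to_T_inj to_T_image to_T_mult)

end

theorem proposition2p7:
  fixes S S0 :: "'a set" and m :: "'a \<Rightarrow> 'a \<Rightarrow> 'a"
  assumes "abundant S m"
    and "qi_adequate_transversal S0 S m"
  shows "let bar = tbar S0 S m; e = te S0 S m; f = tf S0 S m;
             L = {x \<in> S. f x = f (bar x)};
             R = {x \<in> S. e x = e (bar x)};
             T = {(x, a). x \<in> L \<and> a \<in> R \<and> bar x = bar a};
             mT = (\<lambda>(x, a) (y, b). (m (m (e x) a) y, m (m a y) (f b)))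
         in L \<subseteq> S \<and> R \<subseteq> S \<and> left_adequate L m \<and> right_adequate R m \<and>
            sgrp T mT \<and> abundant T mT \<and>
            (\<exists>\<phi>. sgrp_iso \<phi> S m T mT) \<and>
            (\<exists>T0. T0 \<subseteq> T \<and> qi_adequate_transversal T0 T mT \<and>
                  (\<exists>\<psi>. sgrp_iso \<psi> T0 mT S0 m))"
proof -
  interpret qi: qi_transversal S S0 m
    using assms(2) by unfold_locales
  have iso: "sgrp_iso qi.to_T S m qi.Tset qi.mT"
    by (rule qi.to_T_sgrp_iso)
  interpret T: sgrp_embedding qi.to_T S m qi.mT
    using iso qi.S_sgrp unfolding sgrp_iso_def bij_betw_def by unfold_locales auto
  have "sgrp qi.Tset qi.mT" and "abundant qi.Tset qi.mT"
    and "qi_adequate_transversal (qi.to_T ` S0) qi.Tset qi.mT"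
    using T.sgrp_image[OF subset_refl qi.S_sgrp] T.abundant_image[OF subset_refl assms(1)]
      T.qi_adequate_transversal_image[OF assms(2)] qi.to_T_image by simp_all
  moreover have "sgrp_iso (inv_into S qi.to_T) (qi.to_T ` S0) qi.mT S0 m"
    by (rule T.inv_into_sgrp_iso[OF qi.S0_subset qi.S0_sgrp])
  moreover have "qi.to_T ` S0 \<subseteq> qi.Tset"
    using qi.to_T_image qi.S0_subset by blast
  ultimately show ?thesis unfolding Let_def
    using qi.left_adequate_Lset qi.right_adequate_Rset iso by blast
qed

end
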